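(* Let $D>0$, $\beta=1$, $-1<\nu<1$, $\alpha>0$, and let the inelastic curvature be isotropic: $\bar{\mathbf k}=(\bar k,\bar k,0)^\top$ with $\bar k>0$. Consider the minimization of $\mathcal E(\mathbf k)=\tfrac12\mathbf D(\mathbf k-\bar{\mathbf k})\cdot(\mathbf k-\bar{\mathbf k})$ over $\{\mathbf k\in\mathbb R^3:\det\mathbf k=0\}$. Then the set of local minimizers coincides with the set of global minimizers, and it is: (i) if $\alpha>1$: exactly the two points $\mathbf k=((1+\nu)\bar k,0,0)^\top$ and $\mathbf k=(0,(1+\nu)\bar k,0)^\top$, i.e. the cylindrical configurations $(1+\nu)\bar k\,\mathbf e(\varphi)\otimes\mathbf e(\varphi)$ with $\varphi\in\{0,\pi/2\}$; (ii) if $\alpha<1$: exactly the two points $\mathbf k=(c,c,2c)^\top$ and $\mathbf k=(c,c,-2c)^\top$ with $c=\dfrac{(1+\nu)\bar k}{1+\nu+\alpha-\alpha\nu}$, i.e. the cylindrical configurations $2c\,\mathbf e(\varphi)\otimes\mathbf e(\varphi)$ with $\varphi=\pm\pi/4$; (iii) if $\alpha=1$: the whole one-parameter family $\{(1+\nu)\bar k\,(\cos^2\varphi,\sin^2\varphi,2\sin\varphi\cos\varphi)^\top:\ \varphi\in[0,\pi)\}$, i.e. all cylindrical configurations $(1+\nu)\bar k\,\mathbf e(\varphi)\otimes\mathbf e(\varphi)$, which all have the same energy (neutral stability). Moreover, in the coordinates $\boldsymbol\kappa=\kappa_m(1,a\cos\theta,b\sin\theta)$ with $\kappa_m$ eliminated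 through its optimal value, the reduced energy $\tilde U(\theta)=\min_{\kappa_m}\tfrac12\|\boldsymbol\kappa-T\bar{\mathbf k}\|^2$ satisfies $\tilde U'(\theta)=\dfrac{\bar\kappa_m^2(b^2-a^2)\sin2\theta}{2(a^2\cos^2\theta+b^2\sin^2\theta+1)^2}$ with $\bar\kappa_m=\sqrt{1+\nu}\,\bar k$.
   Context: Curvature tensors are Voigt vectors $\mathbf k=(k_{11},k_{22},2k_{12})^\top$, $\det\mathbf k=k_{11}k_{22}-k_{12}^2$, $\mathbf e(\varphi)=(\cos\varphi,\sin\varphi)$. The bending stiffness matrix is $\mathbf D=D\begin{pmatrix}1&\nu&0\\ \nu&\beta&0\\ 0&0&\alpha\frac{1-\nu}{2}\end{pmatrix}$. The map $T$: $\kappa_m=\sqrt{1+\nu/\sqrt\beta}\,\frac{k_{11}+\sqrt\beta\,k_{22}}{2}$, $\kappa_d=\sqrt{1-\nu/\sqrt\beta}\,\frac{\sqrt\beta\,k_{22}-k_{11}}{2}$, $\kappa_t=\sqrt{(1-\nu)\alpha}\,k_{12}$; $a=\sqrt{\frac{\sqrt\beta-\nu}{\sqrt\beta+\nu}}$, $b=\sqrt{\alpha\frac{1-\nu}{\sqrt\beta+\nu}}$ (for $\beta=1$: $a=\sqrt{(1-\nu)/(1+\nu)}$, $b=\sqrt\alpha\,a$). *)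

theory Defs
  imports "HOL-Analysis.Analysis"
begin

text \<open>Curvatures are Voigt vectors (k11, k22, 2 k12), represented as real \<times> real \<times> real
  (with the Euclidean norm of the product type).\<close>

type_synonym voigt = "real \<times> real \<times> real"

definition detV :: "voigt \<Rightarrow> real" where
  "detV k = fst k * fst (snd k) - (snd (snd k) / 2)^2"

definition stiff :: "real \<Rightarrow> real \<Rightarrow> real \<Rightarrow> real \<Rightarrow> voigt \<Rightarrow> voigt" where
  "stiff D \<nu> \<beta> \<alpha> k =
     (D * (fst k + \<nu> * fst (snd k)),
      D * (\<nu> * fst k + \<beta> * fst (snd k)),
      D * (\<alpha> * (1 - \<nu>) / 2) * snd (snd k))"

definition energy :: "real \<Rightarrow> real \<Rightarrow> real \<Rightarrow> real \<Rightarrow> voigt \<Rightarrow> voigt \<Rightarrow> real" where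
  "energy D \<nu> \<beta> \<alpha> kbar k = 1/2 * inner (stiff D \<nu> \<beta> \<alpha> (k - kbar)) (k - kbar)"

definition local_min_on :: "(voigt \<Rightarrow> real) \<Rightarrow> voigt set \<Rightarrow> voigt \<Rightarrow> bool" where
  "local_min_on f S x \<longleftrightarrow> x \<in> S \<and> (\<exists>e>0. \<forall>y\<in>S. dist y x < e \<longrightarrow> f x \<le> f y)"

definition global_min_on :: "(voigt \<Rightarrow> real) \<Rightarrow> voigt set \<Rightarrow> voigt \<Rightarrow> bool" where
  "global_min_on f S x \<longleftrightarrow> x \<in> S \<and> (\<forall>y\<in>S. f x \<le> f y)"

text \<open>The map T (kappa_m, kappa_d, kappa_t), with k12 = (third Voigt component)/2.\<close>
definition Tmap :: "real \<Rightarrow> real \<Rightarrow> real \<Rightarrow> voigt \<Rightarrow> voigt" where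
  "Tmap \<nu> \<beta> \<alpha> k =
     (sqrt (1 + \<nu> / sqrt \<beta>) * (fst k + sqrt \<beta> * fst (snd k)) / 2,
      sqrt (1 - \<nu> / sqrt \<beta>) * (sqrt \<beta> * fst (snd k) - fst k) / 2,
      sqrt ((1 - \<nu>) * \<alpha>) * (snd (snd k) / 2))"

definition aP :: "real \<Rightarrow> real \<Rightarrow> real" where
  "aP \<nu> \<beta> = sqrt ((sqrt \<beta> - \<nu>) / (sqrt \<beta> + \<nu>))"

definition bP :: "real \<Rightarrow> real \<Rightarrow> real \<Rightarrow> real" where
  "bP \<nu> \<beta> \<alpha> = sqrt (\<alpha> * (1 - \<nu>) / (sqrt \<beta> + \<nu>))"

definition Utilde :: "real \<Rightarrow> real \<Rightarrow> real \<Rightarrow> voigt \<Rightarrow> real \<Rightarrow> real" where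
  "Utilde \<nu> \<beta> \<alpha> kbar \<theta> =
     Inf (range (\<lambda>km::real. 1/2 * (norm (km *\<^sub>R (1, aP \<nu> \<beta> * cos \<theta>, bP \<nu> \<beta> \<alpha> * sin \<theta>)
                                   - Tmap \<nu> \<beta> \<alpha> kbar))^2))"

end

theory Submission
  imports Defs
begin

text \<open>
  In Voigt coordinates \<open>(u, v, w)\<close> the constraint \<open>det k = 0\<close> is the cone \<open>w\<^sup>2 = 4 u v\<close>, on which
  \<open>E = D/2 ((u + v - (1 + \<nu>) k)\<^sup>2 + (1 - \<nu>\<^sup>2) k\<^sup>2 + 2 (1 - \<nu>) (\<alpha> - 1) u v)\<close> with \<open>u v \<ge> 0\<close>.
  For \<open>\<alpha> \<ge> 1\<close> this is minimal exactly when \<open>u + v = (1 + \<nu>) k\<close> and \<open>(\<alpha> - 1) u v = 0\<close>;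
  for \<open>\<alpha> < 1\<close>, completing the square in \<open>u + v\<close> and \<open>u - v\<close> gives \<open>u = v = c\<close>.
  A local minimiser is stationary under scaling along its ray (the cone is invariant), which
  excludes the origin and forces \<open>u, v \<ge> 0\<close>; sliding along \<open>u + v = const\<close> inside the cone only
  changes \<open>u v\<close>, which forces \<open>u v = 0\<close> for \<open>\<alpha> > 1\<close> and \<open>u = v\<close> for \<open>\<alpha> < 1\<close>. Together these
  conditions single out the global minimisers. The reduced energy is a quadratic minimisation
  in \<open>\<kappa>\<^sub>m\<close> with closed form \<open>K\<^sup>2 s / (2 (1 + s))\<close>, \<open>s = a\<^sup>2 cos\<^sup>2\<theta> + b\<^sup>2 sin\<^sup>2\<theta>\<close>.
\<close>

lemma not_local_min_on_descent:
  assumes "(\<gamma> \<longlongrightarrow> x) (at_right (0::real))" and "d > 0"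
    and "\<And>t. 0 < t \<Longrightarrow> t < d \<Longrightarrow> \<gamma> t \<in> S \<and> f (\<gamma> t) < f x"
  shows "\<not> local_min_on f S x"
proof
  assume "local_min_on f S x"
  then obtain e where "e > 0" and e: "\<forall>y\<in>S. dist y x < e \<longrightarrow> f x \<le> f y"
    unfolding local_min_on_def by auto
  have "eventually (\<lambda>t. dist (\<gamma> t) x < e) (at_right 0)"
    using assms(1) \<open>e > 0\<close> tendsto_iff by blast
  moreover have "eventually (\<lambda>t. \<gamma> t \<in> S \<and> f (\<gamma> t) < f x) (at_right 0)"
    using assms(2,3) eventually_at_rightI[of 0 d] by auto
  ultimately have "eventually (\<lambda>t. False) (at_right (0::real))"
    by eventually_elim (use e in force)
  then show False by simp
qed

lemma global_min_on_imp_local_min_on: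
  "global_min_on f S x \<Longrightarrow> local_min_on f S x"
  unfolding global_min_on_def local_min_on_def by (auto intro: exI[of _ 1])

lemma global_min_on_iff_eq_bound:
  assumes "\<And>y. y \<in> S \<Longrightarrow> m \<le> f y" and "y\<^sub>0 \<in> S" "f y\<^sub>0 = m"
  shows "global_min_on f S x \<longleftrightarrow> x \<in> S \<and> f x = m"
  using assms unfolding global_min_on_def by (metis order.antisym)

definition curv_quad :: "real \<Rightarrow> real \<Rightarrow> real \<Rightarrow> real \<Rightarrow> real \<Rightarrow> real" where
  "curv_quad \<nu> \<alpha> u v w = u^2 + 2 * \<nu> * u * v + v^2 + \<alpha> * (1 - \<nu>) / 2 * w^2"

lemma curv_quad_eq:
  "curv_quad \<nu> \<alpha> u v w = (1 + \<nu>) / 2 * (u + v)^2 + (1 - \<nu>) / 2 * (u - v)^2 + \<alpha> * (1 - \<nu>) / 2 * w^2"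
  by (simp add: curv_quad_def power2_eq_square field_simps)

lemma curv_quad_pos:
  assumes "-1 < \<nu>" "\<nu> < 1" "\<alpha> > 0" and "(u, v, w) \<noteq> 0"
  shows "curv_quad \<nu> \<alpha> u v w > 0"
proof -
  have "u + v \<noteq> 0 \<or> u - v \<noteq> 0 \<or> w \<noteq> 0"
    using assms(4) by (auto simp: zero_prod_def)
  then have "(1 + \<nu>) / 2 * (u + v)^2 > 0 \<or> (1 - \<nu>) / 2 * (u - v)^2 > 0 \<or> \<alpha> * (1 - \<nu>) / 2 * w^2 > 0"
    using assms(1-3) by (elim disjE) auto
  moreover have "(1 + \<nu>) / 2 * (u + v)^2 \<ge> 0" "(1 - \<nu>) / 2 * (u - v)^2 \<ge> 0" "\<alpha> * (1 - \<nu>) / 2 * w^2 \<ge> 0"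
    using assms(1-3) by auto
  ultimately show ?thesis
    unfolding curv_quad_eq by linarith
qed

lemma detV_eq_0_iff: "detV (u, v, w) = 0 \<longleftrightarrow> w^2 = 4 * u * v"
  by (auto simp: detV_def power2_eq_square field_simps)

lemma cone_product_nonneg: "w^2 = 4 * u * v \<Longrightarrow> u * v \<ge> (0::real)"
  by (metis mult.assoc zero_le_power2 mult_le_cancel_left_pos zero_less_numeral mult_zero_right)

lemma energy_iso:
  "energy D \<nu> 1 \<alpha> (kb, kb, 0) (u, v, w) = D / 2 * curv_quad \<nu> \<alpha> (u - kb) (v - kb) w"
  by (simp add: energy_def stiff_def curv_quad_def inner_Pair power2_eq_square algebra_simps)

lemma curv_quad_on_cone:
  assumes "w^2 = 4 * u * v"
  shows "curv_quad \<nu> \<alpha> u v w = (u + v)^2 + 2 * (1 - \<nu>) * (\<alpha> - 1) * (u * v)"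
  unfolding curv_quad_def assms by (simp add: power2_eq_square field_simps)

lemma energy_on_cone:
  assumes "w^2 = 4 * u * v"
  shows "energy D \<nu> 1 \<alpha> (kb, kb, 0) (u, v, w)
    = D / 2 * ((u + v - (1 + \<nu>) * kb)^2 + (1 - \<nu>^2) * kb^2 + 2 * (1 - \<nu>) * (\<alpha> - 1) * (u * v))"
  unfolding energy_iso curv_quad_def assms by (simp add: power2_eq_square field_simps)

lemma energy_on_cone_scaled:
  assumes "w^2 = 4 * u * v" and "P = 1 + \<nu> + \<alpha> * (1 - \<nu>)"
  shows "P * energy D \<nu> 1 \<alpha> (kb, kb, 0) (u, v, w)
    = D / 2 * ((P * (u + v) - 2 * (1 + \<nu>) * kb)^2 / 2 + P * (1 - \<nu>) * (1 - \<alpha>) * (u - v)^2 / 2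
               + 2 * (1 + \<nu>) * (1 - \<nu>) * \<alpha> * kb^2)"
  unfolding energy_iso curv_quad_def assms by (simp add: power2_eq_square field_simps)

lemma energy_scale:
  "energy D \<nu> 1 \<alpha> (kb, kb, 0) (l * u, l * v, l * w) - energy D \<nu> 1 \<alpha> (kb, kb, 0) (u, v, w)
    = D / 2 * (l - 1) * ((l + 1) * curv_quad \<nu> \<alpha> u v w - 2 * (1 + \<nu>) * kb * (u + v))"
  by (simp add: energy_iso curv_quad_def power2_eq_square field_simps)

lemma global_min_iff_alpha_ge_1:
  assumes "D > 0" "-1 < \<nu>" "\<nu> < 1" "\<alpha> \<ge> 1"
  shows "global_min_on (energy D \<nu> 1 \<alpha> (kb, kb, 0)) {k. detV k = 0} (u, v, w) \<longleftrightarrow>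
    w^2 = 4 * u * v \<and> u + v = (1 + \<nu>) * kb \<and> (\<alpha> - 1) * (u * v) = 0"
proof -
  define m where "m = D / 2 * ((1 - \<nu>^2) * kb^2)"
  define excess where "excess x y = (x + y - (1 + \<nu>) * kb)^2 + 2 * (1 - \<nu>) * (\<alpha> - 1) * (x * y)" for x y
  have energy: "energy D \<nu> 1 \<alpha> (kb, kb, 0) (x, y, z) = m + D / 2 * excess x y"
    if "z^2 = 4 * x * y" for x y z
    unfolding energy_on_cone[OF that] m_def excess_def by (simp add: algebra_simps)
  have excess_nonneg: "0 \<le> 2 * (1 - \<nu>) * (\<alpha> - 1) * (x * y)" if "z^2 = 4 * x * y" for x y z
    using assms(3,4) cone_product_nonneg[OF that] by simp
  have lower: "m \<le> energy D \<nu> 1 \<alpha> (kb, kb, 0) y" if "y \<in> {k. detV k = 0}" for y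
  proof -
    obtain x y' z where y: "y = (x, y', z)" by (cases y)
    with that have "z^2 = 4 * x * y'" by (simp add: detV_eq_0_iff)
    then show ?thesis
      using energy excess_nonneg assms(1) unfolding y excess_def by simp
  qed
  have "global_min_on (energy D \<nu> 1 \<alpha> (kb, kb, 0)) {k. detV k = 0} (u, v, w) \<longleftrightarrow>
      w^2 = 4 * u * v \<and> energy D \<nu> 1 \<alpha> (kb, kb, 0) (u, v, w) = m"
    by (subst global_min_on_iff_eq_bound[OF lower, where y\<^sub>0 = "((1 + \<nu>) * kb, 0, 0)"])
      (simp_all add: detV_eq_0_iff energy excess_def)
  also have "\<dots> \<longleftrightarrow> w^2 = 4 * u * v \<and> excess u v = 0"
    using energy[of w u v] assms(1) by auto
  also have "\<dots> \<longleftrightarrow> w^2 = 4 * u * v \<and> u + v = (1 + \<nu>) * kb \<and> (\<alpha> - 1) * (u * v) = 0"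
    using excess_nonneg[of w u v] assms(3) unfolding excess_def
    by (auto simp: add_nonneg_eq_0_iff)
  finally show ?thesis .
qed

lemma global_min_iff_alpha_lt_1:
  assumes "D > 0" "-1 < \<nu>" "\<nu> < 1" "\<alpha> > 0" "\<alpha> < 1"
    and c: "c = (1 + \<nu>) * kb / (1 + \<nu> + \<alpha> - \<alpha> * \<nu>)"
  shows "global_min_on (energy D \<nu> 1 \<alpha> (kb, kb, 0)) {k. detV k = 0} (u, v, w) \<longleftrightarrow>
    u = c \<and> v = c \<and> w^2 = 4 * c^2"
proof -
  define P where "P = 1 + \<nu> + \<alpha> * (1 - \<nu>)"
  have "P > 0" unfolding P_def using assms(2-4) by (simp add: add_pos_pos)
  have "1 + \<nu> + \<alpha> - \<alpha> * \<nu> = P" unfolding P_def by (simp add: algebra_simps)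
  then have "P * c = (1 + \<nu>) * kb"
    using \<open>P > 0\<close> unfolding c by simp
  define m where "m = D * (1 + \<nu>) * (1 - \<nu>) * \<alpha> * kb^2 / P"
  define excess where "excess x y = (P * (x + y) - 2 * (1 + \<nu>) * kb)^2 / 2 + P * (1 - \<nu>) * (1 - \<alpha>) * (x - y)^2 / 2"
    for x y
  have excess_nonneg: "excess x y \<ge> 0" for x y
    unfolding excess_def using \<open>P > 0\<close> assms(3,5) by (intro add_nonneg_nonneg) simp_all
  have energy: "energy D \<nu> 1 \<alpha> (kb, kb, 0) (x, y, z) = m + D / (2 * P) * excess x y"
    if "z^2 = 4 * x * y" for x y z
  proof -
    have "P * energy D \<nu> 1 \<alpha> (kb, kb, 0) (x, y, z) = P * (m + D / (2 * P) * excess x y)"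
      unfolding energy_on_cone_scaled[OF that P_def] m_def excess_def
      using \<open>P > 0\<close> by (simp add: field_simps)
    then show ?thesis using \<open>P > 0\<close> by simp
  qed
  have lower: "m \<le> energy D \<nu> 1 \<alpha> (kb, kb, 0) y" if "y \<in> {k. detV k = 0}" for y
  proof -
    obtain x y' z where y: "y = (x, y', z)" by (cases y)
    with that have "z^2 = 4 * x * y'" by (simp add: detV_eq_0_iff)
    then show ?thesis
      using energy excess_nonneg[of x y'] assms(1) \<open>P > 0\<close> unfolding y by simp
  qed
  have "excess c c = 0"
    unfolding excess_def using \<open>P * c = (1 + \<nu>) * kb\<close> by (simp add: algebra_simps)
  then have "global_min_on (energy D \<nu> 1 \<alpha> (kb, kb, 0)) {k. detV k = 0} (u, v, w) \<longleftrightarrow>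
      w^2 = 4 * u * v \<and> energy D \<nu> 1 \<alpha> (kb, kb, 0) (u, v, w) = m"
    by (subst global_min_on_iff_eq_bound[OF lower, where y\<^sub>0 = "(c, c, 2 * c)"])
      (simp_all add: detV_eq_0_iff energy power2_eq_square)
  also have "\<dots> \<longleftrightarrow> w^2 = 4 * u * v \<and> excess u v = 0"
    using energy[of w u v] assms(1) \<open>P > 0\<close> by auto
  also have "\<dots> \<longleftrightarrow> w^2 = 4 * u * v \<and> P * (u + v) = 2 * (1 + \<nu>) * kb \<and> u = v"
    using \<open>P > 0\<close> assms(3,5) unfolding excess_def
    by (simp add: add_nonneg_eq_0_iff)
  also have "\<dots> \<longleftrightarrow> w^2 = 4 * u * v \<and> u + v = 2 * c \<and> u = v"
  proof -
    have "P * (u + v) = 2 * (1 + \<nu>) * kb \<longleftrightarrow> P * (u + v) = P * (2 * c)"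
      using \<open>P * c = (1 + \<nu>) * kb\<close> by (metis mult.assoc mult.left_commute)
    then show ?thesis using \<open>P > 0\<close> by simp
  qed
  also have "\<dots> \<longleftrightarrow> u = c \<and> v = c \<and> w^2 = 4 * c^2"
    by (auto simp: power2_eq_square)
  finally show ?thesis .
qed

lemma local_min_on_cone:
  "local_min_on f {k. detV k = 0} (u, v, w) \<Longrightarrow> w^2 = 4 * u * v"
  by (simp add: local_min_on_def detV_eq_0_iff)

lemma local_min_radial:
  assumes "D > 0" "-1 < \<nu>" "\<nu> < 1" "\<alpha> > 0"
    and lm: "local_min_on (energy D \<nu> 1 \<alpha> (kb, kb, 0)) {k. detV k = 0} (u, v, w)"
  shows "curv_quad \<nu> \<alpha> u v w = (1 + \<nu>) * kb * (u + v)"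
proof (rule ccontr)
  define Q where "Q = curv_quad \<nu> \<alpha> u v w"
  define g where "g = 2 * Q - 2 * (1 + \<nu>) * kb * (u + v)"
  assume "curv_quad \<nu> \<alpha> u v w \<noteq> (1 + \<nu>) * kb * (u + v)"
  then have "g \<noteq> 0" unfolding g_def Q_def by (auto simp: algebra_simps)
  have "Q \<ge> 0"
    using curv_quad_pos[OF assms(2-4), of u v w] unfolding Q_def
    by (cases "(u, v, w) = 0") (auto simp: curv_quad_def zero_prod_def)
  \<comment> \<open>\<open>D g / 2\<close> is the derivative of the energy along the ray; move against it.\<close>
  define \<gamma> where "\<gamma> t = ((1 - t * g) * u, (1 - t * g) * v, (1 - t * g) * w)" for t :: real
  have "\<not> local_min_on (energy D \<nu> 1 \<alpha> (kb, kb, 0)) {k. detV k = 0} (u, v, w)"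
  proof (rule not_local_min_on_descent)
    have "(\<gamma> \<longlongrightarrow> ((1 - 0 * g) * u, (1 - 0 * g) * v, (1 - 0 * g) * w)) (at_right 0)"
      unfolding \<gamma>_def by (intro tendsto_intros)
    then show "(\<gamma> \<longlongrightarrow> (u, v, w)) (at_right 0)" by simp
    show "0 < 1 / (Q + 1)" using \<open>Q \<ge> 0\<close> by simp
    fix t :: real
    assume t: "0 < t" "t < 1 / (Q + 1)"
    then have "t * Q < 1"
      using \<open>Q \<ge> 0\<close> by (simp add: field_simps)
    have "energy D \<nu> 1 \<alpha> (kb, kb, 0) (\<gamma> t) - energy D \<nu> 1 \<alpha> (kb, kb, 0) (u, v, w)
        = - (D / 2 * t * g^2 * (1 - t * Q))"
      unfolding \<gamma>_def energy_scale Q_def[symmetric] g_def by (simp add: power2_eq_square algebra_simps)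
    also have "\<dots> < 0"
      using \<open>D > 0\<close> t \<open>g \<noteq> 0\<close> \<open>t * Q < 1\<close> by simp
    finally show "\<gamma> t \<in> {k. detV k = 0} \<and> energy D \<nu> 1 \<alpha> (kb, kb, 0) (\<gamma> t) < energy D \<nu> 1 \<alpha> (kb, kb, 0) (u, v, w)"
      using local_min_on_cone[OF lm] by (simp add: \<gamma>_def detV_eq_0_iff power_mult_distrib power2_eq_square)
  qed
  with lm show False by contradiction
qed

lemma origin_not_local_min:
  assumes "D > 0" "-1 < \<nu>" "kb > 0"
  shows "\<not> local_min_on (energy D \<nu> 1 \<alpha> (kb, kb, 0)) {k. detV k = 0} (0, 0, 0)"
proof (rule not_local_min_on_descent)
  show "((\<lambda>t. (t, 0, 0)) \<longlongrightarrow> (0, 0, 0)) (at_right 0)"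
    by (intro tendsto_intros)
  show "0 < 2 * (1 + \<nu>) * kb" using assms by simp
  fix t :: real
  assume t: "0 < t" "t < 2 * (1 + \<nu>) * kb"
  have "energy D \<nu> 1 \<alpha> (kb, kb, 0) (t, 0, 0) - energy D \<nu> 1 \<alpha> (kb, kb, 0) (0, 0, 0)
      = D / 2 * t * (t - 2 * (1 + \<nu>) * kb)"
    by (simp add: energy_iso curv_quad_def power2_eq_square algebra_simps)
  also have "\<dots> < 0" using assms t by (simp add: mult_pos_neg)
  finally show "(t, 0, 0) \<in> {k. detV k = 0} \<and> energy D \<nu> 1 \<alpha> (kb, kb, 0) (t, 0, 0) < energy D \<nu> 1 \<alpha> (kb, kb, 0) (0, 0, 0)"
    by (simp add: detV_eq_0_iff)
qed

lemma local_min_angular: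
  assumes "D > 0" "d > 0"
    and lm: "local_min_on (energy D \<nu> 1 \<alpha> (kb, kb, 0)) {k. detV k = 0} (u, v, w)"
    and descent: "\<And>t. 0 < t \<Longrightarrow> t < d \<Longrightarrow>
      (u - e * t) * (v + e * t) \<ge> 0 \<and> (1 - \<nu>) * (\<alpha> - 1) * ((u - e * t) * (v + e * t) - u * v) < 0"
  shows False
proof -
  have on_cone: "w^2 = 4 * u * v" using local_min_on_cone[OF lm] .
  define \<sigma> :: real where "\<sigma> = (if w \<ge> 0 then 1 else -1)"
  \<comment> \<open>Slide along the line \<open>u + v = const\<close> inside the cone, keeping the sign of \<open>w\<close>;
    on the cone the energy then only feels the change of \<open>u * v\<close>.\<close>
  define \<gamma> where "\<gamma> t = (u - e * t, v + e * t, \<sigma> * 2 * sqrt ((u - e * t) * (v + e * t)))" for t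
  have "\<sigma> * 2 * sqrt (u * v) = w"
  proof -
    have "u * v = (w / 2)^2" using on_cone by (simp add: power2_eq_square)
    then show ?thesis unfolding \<sigma>_def by auto
  qed
  have "\<not> local_min_on (energy D \<nu> 1 \<alpha> (kb, kb, 0)) {k. detV k = 0} (u, v, w)"
  proof (rule not_local_min_on_descent)
    have "(\<gamma> \<longlongrightarrow> \<gamma> 0) (at_right 0)"
      unfolding \<gamma>_def by (intro tendsto_intros)
    then show "(\<gamma> \<longlongrightarrow> (u, v, w)) (at_right 0)"
      using \<open>\<sigma> * 2 * sqrt (u * v) = w\<close> by (simp add: \<gamma>_def)
    fix t :: real
    assume "0 < t" "t < d"
    note descent[OF this]
    moreover have "\<sigma>^2 = 1" unfolding \<sigma>_def by simp
    ultimately have on_cone_t: "(\<sigma> * 2 * sqrt ((u - e * t) * (v + e * t)))^2 = 4 * (u - e * t) * (v + e * t)"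
      by (simp add: power_mult_distrib)
    have "energy D \<nu> 1 \<alpha> (kb, kb, 0) (\<gamma> t) - energy D \<nu> 1 \<alpha> (kb, kb, 0) (u, v, w)
        = D * ((1 - \<nu>) * (\<alpha> - 1) * ((u - e * t) * (v + e * t) - u * v))"
      unfolding \<gamma>_def energy_on_cone[OF on_cone_t] energy_on_cone[OF on_cone] by (simp add: algebra_simps)
    also have "\<dots> < 0"
      using \<open>D > 0\<close> descent[OF \<open>0 < t\<close> \<open>t < d\<close>] by (simp add: mult_pos_neg)
    finally show "\<gamma> t \<in> {k. detV k = 0} \<and> energy D \<nu> 1 \<alpha> (kb, kb, 0) (\<gamma> t) < energy D \<nu> 1 \<alpha> (kb, kb, 0) (u, v, w)"
      using on_cone_t by (simp add: \<gamma>_def detV_eq_0_iff)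
  qed (fact \<open>d > 0\<close>)
  with lm show False by contradiction
qed

lemma local_min_nonneg:
  assumes "D > 0" "-1 < \<nu>" "\<nu> < 1" "\<alpha> > 0" "kb > 0"
    and lm: "local_min_on (energy D \<nu> 1 \<alpha> (kb, kb, 0)) {k. detV k = 0} (u, v, w)"
  shows "u \<ge> 0" "v \<ge> 0" "u + v > 0"
proof -
  have nonzero: "(u, v, w) \<noteq> 0"
    using lm origin_not_local_min[OF assms(1,2,5)] by (auto simp: zero_prod_def)
  then have "(1 + \<nu>) * kb * (u + v) > 0"
    using curv_quad_pos[OF assms(2-4) nonzero] local_min_radial[OF assms(1-4) lm] by simp
  moreover have "(1 + \<nu>) * kb > 0"
    using assms(2,5) by simp
  ultimately show "u + v > 0"
    by (simp add: zero_less_mult_iff)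
  moreover have "u * v \<ge> 0"
    using cone_product_nonneg[OF local_min_on_cone[OF lm]] .
  ultimately show "u \<ge> 0" "v \<ge> 0"
    by (auto simp: zero_le_mult_iff)
qed

lemma local_min_product_zero:
  assumes "D > 0" "-1 < \<nu>" "\<nu> < 1" "\<alpha> > 1" "kb > 0"
    and lm: "local_min_on (energy D \<nu> 1 \<alpha> (kb, kb, 0)) {k. detV k = 0} (u, v, w)"
  shows "u * v = 0"
proof (rule ccontr)
  assume "u * v \<noteq> 0"
  then have "u > 0" "v > 0"
    using local_min_nonneg[OF assms(1-3) _ assms(5) lm] assms(4) by auto
  define e :: real where "e = (if u \<le> v then 1 else -1)"
  \<comment> \<open>Moving towards the nearer axis decreases \<open>u * v\<close>, which pays off when \<open>\<alpha> > 1\<close>.\<close>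
  show False
  proof (rule local_min_angular[OF assms(1) _ lm, of "min u v" e])
    show "min u v > 0" using \<open>u > 0\<close> \<open>v > 0\<close> by simp
    fix t :: real
    assume t: "0 < t" "t < min u v"
    have "(u - e * t) * (v + e * t) - u * v = - (t * \<bar>u - v\<bar> + t^2)"
      by (simp add: e_def power2_eq_square algebra_simps)
    moreover have "t * \<bar>u - v\<bar> + t^2 > 0" using t by (simp add: add_nonneg_pos)
    moreover have "(u - e * t) * (v + e * t) \<ge> 0" using t by (simp add: e_def)
    moreover have "(1 - \<nu>) * (\<alpha> - 1) > 0" using assms(3,4) by simp
    ultimately show "(u - e * t) * (v + e * t) \<ge> 0 \<and> (1 - \<nu>) * (\<alpha> - 1) * ((u - e * t) * (v + e * t) - u * v) < 0"
      by (simp add: mult_pos_neg)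
  qed
qed

lemma local_min_diagonal:
  assumes "D > 0" "-1 < \<nu>" "\<nu> < 1" "\<alpha> > 0" "\<alpha> < 1" "kb > 0"
    and lm: "local_min_on (energy D \<nu> 1 \<alpha> (kb, kb, 0)) {k. detV k = 0} (u, v, w)"
  shows "u = v"
proof (rule ccontr)
  assume "u \<noteq> v"
  have "u * v \<ge> 0"
    using local_min_nonneg[OF assms(1-4,6) lm] by simp
  define e :: real where "e = (if u > v then 1 else -1)"
  \<comment> \<open>Moving towards the diagonal increases \<open>u * v\<close>, which pays off when \<open>\<alpha> < 1\<close>.\<close>
  show False
  proof (rule local_min_angular[OF assms(1) _ lm, of "\<bar>u - v\<bar>" e])
    show "\<bar>u - v\<bar> > 0" using \<open>u \<noteq> v\<close> by simp
    fix t :: real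
    assume t: "0 < t" "t < \<bar>u - v\<bar>"
    have "(u - e * t) * (v + e * t) - u * v = t * (\<bar>u - v\<bar> - t)"
      by (simp add: e_def power2_eq_square algebra_simps)
    moreover have "t * (\<bar>u - v\<bar> - t) > 0" using t by simp
    moreover have "(1 - \<nu>) * (\<alpha> - 1) < 0" using assms(3,5) by (simp add: mult_pos_neg)
    ultimately show "(u - e * t) * (v + e * t) \<ge> 0 \<and> (1 - \<nu>) * (\<alpha> - 1) * ((u - e * t) * (v + e * t) - u * v) < 0"
      using \<open>u * v \<ge> 0\<close> by (simp add: mult_neg_pos)
  qed
qed

lemma local_min_imp_global_min:
  assumes "D > 0" "-1 < \<nu>" "\<nu> < 1" "\<alpha> > 0" "kb > 0"
    and c: "c = (1 + \<nu>) * kb / (1 + \<nu> + \<alpha> - \<alpha> * \<nu>)"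
    and lm: "local_min_on (energy D \<nu> 1 \<alpha> (kb, kb, 0)) {k. detV k = 0} (u, v, w)"
  shows "global_min_on (energy D \<nu> 1 \<alpha> (kb, kb, 0)) {k. detV k = 0} (u, v, w)"
proof -
  have cone: "w^2 = 4 * u * v" using local_min_on_cone[OF lm] .
  have radial: "(u + v)^2 + 2 * (1 - \<nu>) * (\<alpha> - 1) * (u * v) = (1 + \<nu>) * kb * (u + v)"
    using local_min_radial[OF assms(1-4) lm] curv_quad_on_cone[OF cone] by simp
  have "u + v > 0" using local_min_nonneg[OF assms(1-5) lm] by simp
  show ?thesis
  proof (cases "\<alpha> \<ge> 1")
    case True
    have "(\<alpha> - 1) * (u * v) = 0"
      using local_min_product_zero[OF assms(1-3) _ assms(5) lm] by (cases "\<alpha> = 1") (use True in auto)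
    then have "2 * (1 - \<nu>) * (\<alpha> - 1) * (u * v) = 0"
      by (metis mult.assoc mult_zero_right)
    with radial have "(u + v)^2 = (1 + \<nu>) * kb * (u + v)"
      by linarith
    then have "(u + v) * (u + v) = (u + v) * ((1 + \<nu>) * kb)"
      by (simp add: power2_eq_square algebra_simps)
    then have "u + v = (1 + \<nu>) * kb" using \<open>u + v > 0\<close> by simp
    then show ?thesis
      using global_min_iff_alpha_ge_1[OF assms(1-3) True] cone \<open>(\<alpha> - 1) * (u * v) = 0\<close> by simp
  next
    case False
    then have "u = v" using local_min_diagonal[OF assms(1-4) _ assms(5) lm] by simp
    have "u > 0" using \<open>u + v > 0\<close> \<open>u = v\<close> by simp
    from radial \<open>u = v\<close> have "u * (u * (1 + \<nu> + \<alpha> - \<alpha> * \<nu>)) = u * ((1 + \<nu>) * kb)"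
      by (simp add: power2_eq_square algebra_simps)
    then have "u * (1 + \<nu> + \<alpha> - \<alpha> * \<nu>) = (1 + \<nu>) * kb"
      using \<open>u > 0\<close> by simp
    moreover have "1 + \<nu> + \<alpha> - \<alpha> * \<nu> > 0"
      using assms(2) mult_strict_left_mono[OF assms(3,4)] by simp
    ultimately have "u = c"
      unfolding c by (simp add: field_simps)
    then show ?thesis
      using global_min_iff_alpha_lt_1[OF assms(1-4) _ c] False cone \<open>u = v\<close> by (simp add: power2_eq_square)
  qed
qed

lemma local_minimizers_eq_global_minimizers:
  assumes "D > 0" "-1 < \<nu>" "\<nu> < 1" "\<alpha> > 0" "kb > 0"
  shows "{k. local_min_on (energy D \<nu> 1 \<alpha> (kb, kb, 0)) {k. detV k = 0} k}
    = {k. global_min_on (energy D \<nu> 1 \<alpha> (kb, kb, 0)) {k. detV k = 0} k}"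
proof (rule set_eqI)
  fix k :: voigt
  obtain u v w where k: "k = (u, v, w)" by (cases k)
  show "k \<in> {k. local_min_on (energy D \<nu> 1 \<alpha> (kb, kb, 0)) {k. detV k = 0} k}
    \<longleftrightarrow> k \<in> {k. global_min_on (energy D \<nu> 1 \<alpha> (kb, kb, 0)) {k. detV k = 0} k}"
    unfolding k mem_Collect_eq
    using local_min_imp_global_min[OF assms refl] global_min_on_imp_local_min_on by blast
qed

lemma global_minimizers_alpha_gt_1:
  assumes "D > 0" "-1 < \<nu>" "\<nu> < 1" "\<alpha> > 1"
  shows "{k. global_min_on (energy D \<nu> 1 \<alpha> (kb, kb, 0)) {k. detV k = 0} k}
    = {((1 + \<nu>) * kb, 0, 0), (0, (1 + \<nu>) * kb, 0)}"
proof (rule set_eqI)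
  fix k :: voigt
  obtain u v w where k: "k = (u, v, w)" by (cases k)
  have "w^2 = 4 * u * v \<and> u + v = (1 + \<nu>) * kb \<and> (\<alpha> - 1) * (u * v) = 0
      \<longleftrightarrow> (u, v, w) \<in> {((1 + \<nu>) * kb, 0, 0), (0, (1 + \<nu>) * kb, 0)}"
  proof
    assume h: "w^2 = 4 * u * v \<and> u + v = (1 + \<nu>) * kb \<and> (\<alpha> - 1) * (u * v) = 0"
    then have "u * v = 0" using assms(4) by simp
    with h have "w = 0" by (simp add: mult.assoc)
    with h \<open>u * v = 0\<close> show "(u, v, w) \<in> {((1 + \<nu>) * kb, 0, 0), (0, (1 + \<nu>) * kb, 0)}"
      by auto
  qed auto
  then show "k \<in> {k. global_min_on (energy D \<nu> 1 \<alpha> (kb, kb, 0)) {k. detV k = 0} k}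
    \<longleftrightarrow> k \<in> {((1 + \<nu>) * kb, 0, 0), (0, (1 + \<nu>) * kb, 0)}"
    unfolding k mem_Collect_eq global_min_iff_alpha_ge_1[OF assms(1-3) less_imp_le[OF assms(4)]] .
qed

lemma global_minimizers_alpha_lt_1:
  assumes "D > 0" "-1 < \<nu>" "\<nu> < 1" "\<alpha> > 0" "\<alpha> < 1"
    and "c = (1 + \<nu>) * kb / (1 + \<nu> + \<alpha> - \<alpha> * \<nu>)"
  shows "{k. global_min_on (energy D \<nu> 1 \<alpha> (kb, kb, 0)) {k. detV k = 0} k}
    = {(c, c, 2 * c), (c, c, - 2 * c)}"
proof (rule set_eqI)
  fix k :: voigt
  obtain u v w where k: "k = (u, v, w)" by (cases k)
  have "w^2 = 4 * c^2 \<longleftrightarrow> w = 2 * c \<or> w = - 2 * c"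
    using power2_eq_iff[of w "2 * c"] by (simp add: power_mult_distrib)
  then have "u = c \<and> v = c \<and> w^2 = 4 * c^2 \<longleftrightarrow> (u, v, w) \<in> {(c, c, 2 * c), (c, c, - 2 * c)}"
    by auto
  then show "k \<in> {k. global_min_on (energy D \<nu> 1 \<alpha> (kb, kb, 0)) {k. detV k = 0} k}
    \<longleftrightarrow> k \<in> {(c, c, 2 * c), (c, c, - 2 * c)}"
    unfolding k mem_Collect_eq global_min_iff_alpha_lt_1[OF assms] .
qed

lemma cone_slice_eq_rank_one:
  fixes R :: real
  assumes "R > 0"
  shows "w^2 = 4 * u * v \<and> u + v = R \<longleftrightarrow>
    (\<exists>\<phi>. (u, v, w) = R *\<^sub>R ((cos \<phi>)^2, (sin \<phi>)^2, 2 * sin \<phi> * cos \<phi>) \<and> 0 \<le> \<phi> \<and> \<phi> < pi)"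
proof
  assume h: "w^2 = 4 * u * v \<and> u + v = R"
  have "(u - v)^2 + w^2 = R^2"
    using h by (auto simp: power2_eq_square algebra_simps)
  then have "((u - v) / R)^2 + (w / R)^2 = 1"
    using \<open>R > 0\<close> by (simp add: power_divide add_divide_distrib[symmetric])
  then obtain t where t: "0 \<le> t" "t < 2 * pi" "(u - v) / R = cos t" "w / R = sin t"
    by (rule sincos_total_2pi)
  \<comment> \<open>Half-angle: \<open>(u - v, w) = R (cos 2\<phi>, sin 2\<phi>)\<close>.\<close>
  define \<phi> where "\<phi> = t / 2"
  then have "t = 2 * \<phi>" by simp
  have "u - v = R * (2 * (cos \<phi>)^2 - 1)" "w = R * (2 * sin \<phi> * cos \<phi>)"
    using t(3,4) \<open>R > 0\<close> unfolding \<open>t = 2 * \<phi>\<close> cos_double_cos sin_double by (simp_all add: field_simps)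
  moreover have "R * (2 * (cos \<phi>)^2 - 1) = 2 * (R * (cos \<phi>)^2) - R"
    "R * (sin \<phi>)^2 = R - R * (cos \<phi>)^2"
    by (simp_all add: sin_squared_eq algebra_simps)
  ultimately have "(u, v, w) = R *\<^sub>R ((cos \<phi>)^2, (sin \<phi>)^2, 2 * sin \<phi> * cos \<phi>)"
    using h by auto
  moreover have "0 \<le> \<phi>" "\<phi> < pi" using t(1,2) unfolding \<phi>_def by simp_all
  ultimately show "\<exists>\<phi>. (u, v, w) = R *\<^sub>R ((cos \<phi>)^2, (sin \<phi>)^2, 2 * sin \<phi> * cos \<phi>) \<and> 0 \<le> \<phi> \<and> \<phi> < pi"
    by blast
next
  assume "\<exists>\<phi>. (u, v, w) = R *\<^sub>R ((cos \<phi>)^2, (sin \<phi>)^2, 2 * sin \<phi> * cos \<phi>) \<and> 0 \<le> \<phi> \<and> \<phi> < pi"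
  then obtain \<phi> where "u = R * (cos \<phi>)^2" "v = R * (sin \<phi>)^2" "w = R * (2 * sin \<phi> * cos \<phi>)"
    by auto
  then show "w^2 = 4 * u * v \<and> u + v = R"
    by (simp add: power2_eq_square algebra_simps flip: distrib_left)
qed

lemma global_minimizers_alpha_eq_1:
  assumes "D > 0" "-1 < \<nu>" "\<nu> < 1" "kb > 0"
  shows "{k. global_min_on (energy D \<nu> 1 1 (kb, kb, 0)) {k. detV k = 0} k}
    = {((1 + \<nu>) * kb) *\<^sub>R ((cos \<phi>)^2, (sin \<phi>)^2, 2 * sin \<phi> * cos \<phi>) | \<phi>. 0 \<le> \<phi> \<and> \<phi> < pi}"
proof (rule set_eqI)
  fix k :: voigt
  obtain u v w where k: "k = (u, v, w)" by (cases k)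
  have "(1 + \<nu>) * kb > 0" using assms(2,4) by simp
  from cone_slice_eq_rank_one[OF this, of w u v]
  show "k \<in> {k. global_min_on (energy D \<nu> 1 1 (kb, kb, 0)) {k. detV k = 0} k}
    \<longleftrightarrow> k \<in> {((1 + \<nu>) * kb) *\<^sub>R ((cos \<phi>)^2, (sin \<phi>)^2, 2 * sin \<phi> * cos \<phi>) | \<phi>. 0 \<le> \<phi> \<and> \<phi> < pi}"
    unfolding k mem_Collect_eq global_min_iff_alpha_ge_1[OF assms(1-3) order.refl] by auto
qed

lemma Inf_half_sq_dist_line:
  fixes K p q :: real
  shows "Inf (range (\<lambda>\<kappa>::real. 1/2 * (norm (\<kappa> *\<^sub>R (1, p, q) - (K, 0, 0)))^2))
    = K^2 * (p^2 + q^2) / (2 * (1 + (p^2 + q^2)))"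
proof -
  define s where "s = p^2 + q^2"
  have "s \<ge> 0" unfolding s_def by simp
  have dist: "1/2 * (norm (\<kappa> *\<^sub>R (1, p, q) - (K, 0, 0)))^2 = 1/2 * ((\<kappa> - K)^2 + s * \<kappa>^2)" for \<kappa>
    unfolding s_def power2_norm_eq_inner by (simp add: inner_Pair power2_eq_square algebra_simps)
  \<comment> \<open>Completing the square: \<open>(1 + s) ((\<kappa> - K)^2 + s \<kappa>^2) = ((1 + s) \<kappa> - K)^2 + s K^2\<close>,
    so the infimum is attained at \<open>\<kappa> = K / (1 + s)\<close>.\<close>
  show ?thesis unfolding dist s_def[symmetric]
  proof (rule cInf_eq_minimum)
    show "K^2 * s / (2 * (1 + s)) \<in> range (\<lambda>\<kappa>. 1/2 * ((\<kappa> - K)^2 + s * \<kappa>^2))"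
    proof
      have "K^2 * (d - 1) / (2 * d) = 1/2 * ((K / d - K)^2 + (d - 1) * (K / d)^2)" if "d \<noteq> 0" for d :: real
        using that by (simp add: field_simps power2_eq_square)
      from this[of "1 + s"] \<open>s \<ge> 0\<close>
      show "K^2 * s / (2 * (1 + s)) = 1/2 * ((K / (1 + s) - K)^2 + s * (K / (1 + s))^2)"
        by simp
    qed simp
    fix x
    assume "x \<in> range (\<lambda>\<kappa>. 1/2 * ((\<kappa> - K)^2 + s * \<kappa>^2))"
    then obtain \<kappa> where x: "x = 1/2 * ((\<kappa> - K)^2 + s * \<kappa>^2)" by auto
    have "(1 + s) * ((\<kappa> - K)^2 + s * \<kappa>^2) = ((1 + s) * \<kappa> - K)^2 + s * K^2"
      by (simp add: power2_eq_square algebra_simps)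
    then have "(1 + s) * ((\<kappa> - K)^2 + s * \<kappa>^2) \<ge> s * K^2" by simp
    then show "K^2 * s / (2 * (1 + s)) \<le> x"
      unfolding x using \<open>s \<ge> 0\<close> by (simp add: field_simps)
  qed
qed

lemma has_real_derivative_saturation:
  fixes g :: "real \<Rightarrow> real"
  assumes "(g has_real_derivative g') (at x)" and "g x \<ge> 0"
  shows "((\<lambda>x. K^2 * g x / (2 * (1 + g x))) has_real_derivative K^2 * g' / (2 * (g x + 1)^2)) (at x)"
proof -
  have "K^2 * g' / (2 * d^2) = (K^2 * g' * (2 * d) - K^2 * (d - 1) * (2 * g')) / (2 * d * (2 * d))"
    if "d \<noteq> 0" for d :: real
    using that by (simp add: field_simps power2_eq_square)
  from this[of "1 + g x"] assms(2)
  have "K^2 * g' / (2 * (g x + 1)^2)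
      = (K^2 * g' * (2 * (1 + g x)) - K^2 * g x * (2 * g')) / (2 * (1 + g x) * (2 * (1 + g x)))"
    by (simp add: add.commute)
  with assms show ?thesis
    by (auto intro!: derivative_eq_intros)
qed

lemma Utilde_iso:
  "Utilde \<nu> 1 \<alpha> (kb, kb, 0) = (\<lambda>\<theta>. (sqrt (1 + \<nu>) * kb)^2 * ((aP \<nu> 1 * cos \<theta>)^2 + (bP \<nu> 1 \<alpha> * sin \<theta>)^2)
      / (2 * (1 + ((aP \<nu> 1 * cos \<theta>)^2 + (bP \<nu> 1 \<alpha> * sin \<theta>)^2))))"
proof -
  have T: "Tmap \<nu> 1 \<alpha> (kb, kb, 0) = (sqrt (1 + \<nu>) * kb, 0, 0)"
    by (simp add: Tmap_def)
  show ?thesis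
    unfolding Utilde_def T Inf_half_sq_dist_line ..
qed

lemma Utilde_iso_deriv:
  "(Utilde \<nu> 1 \<alpha> (kb, kb, 0) has_real_derivative
     (sqrt (1 + \<nu>) * kb)^2 * ((bP \<nu> 1 \<alpha>)^2 - (aP \<nu> 1)^2) * sin (2 * \<theta>)
     / (2 * ((aP \<nu> 1)^2 * (cos \<theta>)^2 + (bP \<nu> 1 \<alpha>)^2 * (sin \<theta>)^2 + 1)^2)) (at \<theta>)"
proof -
  have "((\<lambda>\<theta>. (aP \<nu> 1 * cos \<theta>)^2 + (bP \<nu> 1 \<alpha> * sin \<theta>)^2) has_real_derivative
      ((bP \<nu> 1 \<alpha>)^2 - (aP \<nu> 1)^2) * sin (2 * \<theta>)) (at \<theta>)"
    unfolding sin_double by (auto intro!: derivative_eq_intros simp: algebra_simps power2_eq_square)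
  from has_real_derivative_saturation[OF this, of "sqrt (1 + \<nu>) * kb"] show ?thesis
    unfolding Utilde_iso by (simp add: power_mult_distrib mult.assoc)
qed

theorem mainTheorem4:
  fixes D \<nu> \<alpha> kb :: real
  assumes "D > 0" and "-1 < \<nu>" and "\<nu> < 1" and "\<alpha> > 0" and "kb > 0"
  defines "E \<equiv> energy D \<nu> 1 \<alpha> (kb, kb, 0)"
      and "S \<equiv> {k. detV k = 0}"
      and "c \<equiv> (1 + \<nu>) * kb / (1 + \<nu> + \<alpha> - \<alpha> * \<nu>)"
  shows "{k. local_min_on E S k} = {k. global_min_on E S k}
    \<and> (\<alpha> > 1 \<longrightarrow> {k. global_min_on E S k} = {((1 + \<nu>) * kb, 0, 0), (0, (1 + \<nu>) * kb, 0)})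
    \<and> (\<alpha> < 1 \<longrightarrow> {k. global_min_on E S k} = {(c, c, 2 * c), (c, c, - 2 * c)})
    \<and> (\<alpha> = 1 \<longrightarrow> {k. global_min_on E S k} =
          {((1 + \<nu>) * kb) *\<^sub>R ((cos \<phi>)^2, (sin \<phi>)^2, 2 * sin \<phi> * cos \<phi>) | \<phi>. 0 \<le> \<phi> \<and> \<phi> < pi})
    \<and> (\<forall>\<theta>. (Utilde \<nu> 1 \<alpha> (kb, kb, 0) has_real_derivative
           (sqrt (1 + \<nu>) * kb)^2 * ((bP \<nu> 1 \<alpha>)^2 - (aP \<nu> 1)^2) * sin (2 * \<theta>)
           / (2 * ((aP \<nu> 1)^2 * (cos \<theta>)^2 + (bP \<nu> 1 \<alpha>)^2 * (sin \<theta>)^2 + 1)^2)) (at \<theta>))"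
proof (intro conjI impI allI)
  show "{k. local_min_on E S k} = {k. global_min_on E S k}"
    unfolding E_def S_def using local_minimizers_eq_global_minimizers[OF assms(1-5)] .
  show "{k. global_min_on E S k} = {((1 + \<nu>) * kb, 0, 0), (0, (1 + \<nu>) * kb, 0)}" if "\<alpha> > 1"
    unfolding E_def S_def using global_minimizers_alpha_gt_1[OF assms(1-3) that] .
  show "{k. global_min_on E S k} = {(c, c, 2 * c), (c, c, - 2 * c)}" if "\<alpha> < 1"
    unfolding E_def S_def using global_minimizers_alpha_lt_1[OF assms(1-4) that c_def[THEN meta_eq_to_obj_eq]] .
  show "{k. global_min_on E S k} =
      {((1 + \<nu>) * kb) *\<^sub>R ((cos \<phi>)^2, (sin \<phi>)^2, 2 * sin \<phi> * cos \<phi>) | \<phi>. 0 \<le> \<phi> \<and> \<phi> < pi}"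
    if "\<alpha> = 1"
    unfolding E_def S_def that using global_minimizers_alpha_eq_1[OF assms(1-3,5)] .
qed (rule Utilde_iso_deriv)

end
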